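(* (Completeness) For every set $\Phi\subseteq\mathcal{L}_T$ and every $\alpha\in\mathcal{L}_T$: if $\Phi\models\alpha$, then $\Phi\vdash\alpha$ in SBTrust.
   Context: Propositional formulas: $\varphi::=\bot\mid p\mid\varphi\land\varphi\mid\varphi\lor\varphi\mid\varphi\to\varphi\mid\varphi\leftrightarrow\varphi\mid\neg\varphi$ over a countable set of variables. $\mathcal{L}_T$: $\alpha::=\varphi\mid\varphi\rightsquigarrow\varphi\mid B(\alpha)\mid\alpha*\alpha\mid\neg\alpha$ ($\varphi$ propositional, $*\in\{\land,\lor,\to,\leftrightarrow\}$). SBTrust is the Hilbert system (rule applications must yield formulas of $\mathcal{L}_T$; $\varphi,\psi,\chi,\varphi_i,\psi_i$ propositional; $\alpha,\beta\in\mathcal{L}_T$) with: all classical tautologies over $\mathcal{L}_T$ and Modus Ponens; $\mathbf{ID}$: $\varphi\rightsquigarrow\varphi$; $\mathbf{ST}$: $(\varphi\rightsquigarrow\bot)\to\neg\varphi$; $\mathbf{SH}$: $((\psi\land\chi)\rightsquigarrow\varphi)\to(\psi\rightsquigarrow(\chi\to\varphi))$; $\mathbf{LL+}$: $(\neg(\varphi\leftrightarrow\psi)\rightsquigarrow\bot)\to((\varphi\rightsquigarrow\chi)\leftrightarrow(\psi\rightsquigarrow\chi))$; rule $\mathbf{RCK}$: from $(\varphi_1\land\dots\land\varphi_n)\to\varphi_{n+1}$ infer $((\psi\rightsquigarrow\varphi_1)\land\dots\land(\psi\rightsquigarrow\varphi_n))\to(\psi\rightsquigarrow\varphi_{n+1})$;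 rule $\mathbf{S5_F}$: from $(\ell_1\land\dots\land\ell_n)\to\chi$ infer $(\ell_1\land\dots\land\ell_n)\to(\neg\chi\rightsquigarrow\bot)$, each $\ell_j$ being $\varphi_j\rightsquigarrow\psi_j$ or $\neg(\varphi_j\rightsquigarrow\psi_j)$, $\chi$ propositional; $\mathbf{KB}$: $B(\alpha\to\beta)\to(B(\alpha)\to B(\beta))$; $\mathbf{DB}$: $B(\alpha)\to\neg B(\neg\alpha)$; $\mathbf{4B}$: $B(\alpha)\to B(B(\alpha))$; necessitation for $B$. $\Phi\vdash\alpha$ is derivability from assumptions in the usual sense. A Trust model is $\mathcal{M}=\langle S,(S_i)_{i\in I},(\succeq_i)_{i\in I},R,V\rangle$: $R\subseteq S\times S$ serial and transitive; $(S_i)$ a partition of $S$; $\succeq_i\subseteq S_i\times S_i$ arbitrary; $V$ maps variables to subsets of $S$; and for each $i$ and propositional $\varphi$, $\|\varphi\|_i\neq\emptyset\Rightarrow\mathit{most}(\|\varphi\|_i)\neq\emptyset$, with $\|\varphi\|_i=\{v\in S_i:\mathcal{M},v\models\varphi\}$, $\mathit{most}(X)=\{s\in X:\forall v\in X\,(v\succeq_i s\Rightarrow s\succeq_i v)\}$. Truth: $s\models p$ iff $s\in V(p)$; Boolean clauses as usual; $s\models\varphi\rightsquigarrow\psi$ iff $\mathit{most}(\|\varphi\|_i)\subseteq\|\psi\|_i$ where $s\in S_i$; $s\models B(\alpha)$ iff $v\models\alpha$ for every $v$ with $sRv$. $\Phi\models\alpha$: in every Trust model, every state satisfying all of $\Phi$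 satisfies $\alpha$. *)

theory Defs
  imports Main
begin

datatype pform =
    PBot
  | PVar nat
  | PAnd pform pform
  | POr pform pform
  | PImp pform pform
  | PIff pform pform
  | PNot pform

text \<open>The language L_T.  Propositional formulas are embedded homomorphically
  (via emb below), so every formula of L_T has a unique representation.\<close>
datatype tform =
    TBot
  | TVar nat
  | TCond pform pform
  | TB tform
  | TAnd tform tform
  | TOr tform tform
  | TImp tform tform
  | TIff tform tform
  | TNot tform

fun emb :: "pform \<Rightarrow> tform" where
  "emb PBot = TBot"
| "emb (PVar p) = TVar p"
| "emb (PAnd a b) = TAnd (emb a) (emb b)"
| "emb (POr a b) = TOr (emb a) (emb b)"
| "emb (PImp a b) = TImp (emb a) (emb b)"
| "emb (PIff a b) = TIff (emb a) (emb b)"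
| "emb (PNot a) = TNot (emb a)"

fun bigconj :: "tform list \<Rightarrow> tform" where
  "bigconj [] = TNot TBot"
| "bigconj [a] = a"
| "bigconj (a # as) = TAnd a (bigconj as)"

definition limp :: "tform list \<Rightarrow> tform \<Rightarrow> tform" where
  "limp as c = (if as = [] then c else TImp (bigconj as) c)"

definition is_literal :: "tform \<Rightarrow> bool" where
  "is_literal l \<longleftrightarrow> (\<exists>\<phi> \<psi>. l = TCond \<phi> \<psi>) \<or> (\<exists>\<phi> \<psi>. l = TNot (TCond \<phi> \<psi>))"

text \<open>Truth-functional evaluation: the non-Boolean subformulas (variables,
  conditionals, belief formulas) are treated as atoms.\<close>
fun teval :: "(tform \<Rightarrow> bool) \<Rightarrow> tform \<Rightarrow> bool" where
  "teval f TBot = False"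
| "teval f (TVar p) = f (TVar p)"
| "teval f (TCond a b) = f (TCond a b)"
| "teval f (TB a) = f (TB a)"
| "teval f (TAnd a b) = (teval f a \<and> teval f b)"
| "teval f (TOr a b) = (teval f a \<or> teval f b)"
| "teval f (TImp a b) = (teval f a \<longrightarrow> teval f b)"
| "teval f (TIff a b) = (teval f a \<longleftrightarrow> teval f b)"
| "teval f (TNot a) = (\<not> teval f a)"

definition tautology :: "tform \<Rightarrow> bool" where
  "tautology a \<longleftrightarrow> (\<forall>f. teval f a)"

inductive SBTrust_thm :: "tform \<Rightarrow> bool" where
  TAUT: "tautology a \<Longrightarrow> SBTrust_thm a"
| MP: "SBTrust_thm a \<Longrightarrow> SBTrust_thm (TImp a b) \<Longrightarrow> SBTrust_thm b"
| ID: "SBTrust_thm (TCond \<phi> \<phi>)"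
| ST: "SBTrust_thm (TImp (TCond \<phi> PBot) (TNot (emb \<phi>)))"
| SH: "SBTrust_thm (TImp (TCond (PAnd \<psi> \<chi>) \<phi>) (TCond \<psi> (PImp \<chi> \<phi>)))"
| LLplus: "SBTrust_thm (TImp (TCond (PNot (PIff \<phi> \<psi>)) PBot)
                              (TIff (TCond \<phi> \<chi>) (TCond \<psi> \<chi>)))"
| RCK: "SBTrust_thm (limp (map emb \<phi>s) (emb \<phi>')) \<Longrightarrow>
        SBTrust_thm (limp (map (TCond \<psi>) \<phi>s) (TCond \<psi> \<phi>'))"
| S5F: "\<forall>l \<in> set ls. is_literal l \<Longrightarrow> SBTrust_thm (limp ls (emb \<chi>)) \<Longrightarrow>
        SBTrust_thm (limp ls (TCond (PNot \<chi>) PBot))"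
| KB: "SBTrust_thm (TImp (TB (TImp a b)) (TImp (TB a) (TB b)))"
| DB: "SBTrust_thm (TImp (TB a) (TNot (TB (TNot a))))"
| FourB: "SBTrust_thm (TImp (TB a) (TB (TB a)))"
| NecB: "SBTrust_thm a \<Longrightarrow> SBTrust_thm (TB a)"

text \<open>Derivability from assumptions in the usual sense: the rules (RCK, S5_F,
  necessitation) apply to theorems only; assumptions are combined by MP.\<close>
inductive derivable :: "tform set \<Rightarrow> tform \<Rightarrow> bool" (infix "\<turnstile>" 50) where
  Assm: "a \<in> \<Phi> \<Longrightarrow> \<Phi> \<turnstile> a"
| Thm: "SBTrust_thm a \<Longrightarrow> \<Phi> \<turnstile> a"
| MPd: "\<Phi> \<turnstile> a \<Longrightarrow> \<Phi> \<turnstile> TImp a b \<Longrightarrow> \<Phi> \<turnstile> b"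

text \<open>The partition (S_i)_{i \<in> I} is represented by its set of cells;
  the preorder-like relation \<succeq>_i is indexed by the cell S_i.\<close>
record 'w trust_model =
  St :: "'w set"
  Cells :: "'w set set"
  Pref :: "'w set \<Rightarrow> 'w \<Rightarrow> 'w \<Rightarrow> bool"
  Rel :: "'w \<Rightarrow> 'w \<Rightarrow> bool"
  Val :: "nat \<Rightarrow> 'w set"

fun psat :: "('w, 'x) trust_model_scheme \<Rightarrow> 'w \<Rightarrow> pform \<Rightarrow> bool" where
  "psat M s PBot = False"
| "psat M s (PVar p) = (s \<in> Val M p)"
| "psat M s (PAnd a b) = (psat M s a \<and> psat M s b)"
| "psat M s (POr a b) = (psat M s a \<or> psat M s b)"
| "psat M s (PImp a b) = (psat M s a \<longrightarrow> psat M s b)"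
| "psat M s (PIff a b) = (psat M s a \<longleftrightarrow> psat M s b)"
| "psat M s (PNot a) = (\<not> psat M s a)"

definition ext :: "('w, 'x) trust_model_scheme \<Rightarrow> 'w set \<Rightarrow> pform \<Rightarrow> 'w set" where
  "ext M C \<phi> = {v \<in> C. psat M v \<phi>}"

definition most :: "('w, 'x) trust_model_scheme \<Rightarrow> 'w set \<Rightarrow> 'w set \<Rightarrow> 'w set" where
  "most M C X = {s \<in> X. \<forall>v \<in> X. Pref M C v s \<longrightarrow> Pref M C s v}"

definition is_partition :: "'w set \<Rightarrow> 'w set set \<Rightarrow> bool" where
  "is_partition S P \<longleftrightarrow> \<Union>P = S \<and> {} \<notin> P \<and>
     (\<forall>C \<in> P. \<forall>D \<in> P. C \<noteq> D \<longrightarrow> C \<inter> D = {})"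

definition trust_model :: "('w, 'x) trust_model_scheme \<Rightarrow> bool" where
  "trust_model M \<longleftrightarrow>
     (\<forall>s t. Rel M s t \<longrightarrow> s \<in> St M \<and> t \<in> St M) \<and>
     (\<forall>s \<in> St M. \<exists>t. Rel M s t) \<and>
     (\<forall>s t u. Rel M s t \<longrightarrow> Rel M t u \<longrightarrow> Rel M s u) \<and>
     is_partition (St M) (Cells M) \<and>
     (\<forall>C \<in> Cells M. \<forall>s t. Pref M C s t \<longrightarrow> s \<in> C \<and> t \<in> C) \<and>
     (\<forall>p. Val M p \<subseteq> St M) \<and>
     (\<forall>C \<in> Cells M. \<forall>\<phi>. ext M C \<phi> \<noteq> {} \<longrightarrow> most M C (ext M C \<phi>) \<noteq> {})"

fun tsat :: "('w, 'x) trust_model_scheme \<Rightarrow> 'w \<Rightarrow> tform \<Rightarrow> bool" where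
  "tsat M s TBot = False"
| "tsat M s (TVar p) = (s \<in> Val M p)"
| "tsat M s (TCond \<phi> \<psi>) =
     (\<forall>C \<in> Cells M. s \<in> C \<longrightarrow> most M C (ext M C \<phi>) \<subseteq> ext M C \<psi>)"
| "tsat M s (TB a) = (\<forall>v. Rel M s v \<longrightarrow> tsat M v a)"
| "tsat M s (TAnd a b) = (tsat M s a \<and> tsat M s b)"
| "tsat M s (TOr a b) = (tsat M s a \<or> tsat M s b)"
| "tsat M s (TImp a b) = (tsat M s a \<longrightarrow> tsat M s b)"
| "tsat M s (TIff a b) = (tsat M s a \<longleftrightarrow> tsat M s b)"
| "tsat M s (TNot a) = (\<not> tsat M s a)"

definition entails_on :: "'w itself \<Rightarrow> tform set \<Rightarrow> tform \<Rightarrow> bool" where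
  "entails_on _ \<Phi> a \<longleftrightarrow>
     (\<forall>M :: 'w trust_model. trust_model M \<longrightarrow>
        (\<forall>s \<in> St M. (\<forall>b \<in> \<Phi>. tsat M s b) \<longrightarrow> tsat M s a))"

text \<open>\<Phi> \<Turnstile> a: quantification over all Trust models whose state space is
  (a subset of) a fixed, very large type (cardinality 2^(2^aleph0)),
  which contains an isomorphic copy of every model of cardinality at most that.\<close>
definition entails :: "tform set \<Rightarrow> tform \<Rightarrow> bool" (infix "\<Turnstile>" 50) where
  "\<Phi> \<Turnstile> a \<longleftrightarrow> entails_on TYPE(tform set set) \<Phi> a"

end

theory Submission
  imports Defs
begin

(* A canonical model argument. Its worlds are the maximal consistent sets Delta, together
   with tagged copies (Delta, chi) for every chi for which Delta is normal, i.e. contains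
   every psi with chi ~> psi in Delta; a cell collects the worlds agreeing on all
   conditionals. Rule S5_F lets (not chi) ~> bot express "chi holds throughout the cell",
   which with ID, RCK and LL+ yields: if phi ~> psi fails in Delta, some phi-normal cell
   mate refutes psi. The preference is arranged so that chi-tagged worlds are most normal
   among the chi-worlds, and conversely a most normal phi-world carries a tag chi with
   phi -> chi valid in the cell; LL+ and SH turn phi ~> psi into chi ~> (phi -> psi),
   which the chi-normal world satisfies. Belief uses the usual canonical relation of KD4.
   Finally, entailment quantifies over states of one fixed type only, so the canonical
   model is transported into that type along an injection. *)

section \<open>Derivability\<close>

fun imps :: "tform list \<Rightarrow> tform \<Rightarrow> tform" where
  "imps [] c = c"
| "imps (a # as) c = TImp a (imps as c)"

fun pimps :: "pform list \<Rightarrow> pform \<Rightarrow> pform" where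
  "pimps [] c = c"
| "pimps (a # as) c = PImp a (pimps as c)"

lemma teval_imps: "teval f (imps as c) \<longleftrightarrow> (\<forall>a\<in>set as. teval f a) \<longrightarrow> teval f c"
  by (induction as) auto

lemma teval_bigconj: "teval f (bigconj as) \<longleftrightarrow> (\<forall>a\<in>set as. teval f a)"
  by (induction as rule: bigconj.induct) auto

lemma teval_limp: "teval f (limp as c) \<longleftrightarrow> (\<forall>a\<in>set as. teval f a) \<longrightarrow> teval f c"
  by (auto simp: limp_def teval_bigconj)

lemma emb_pimps: "emb (pimps \<phi>s \<psi>) = imps (map emb \<phi>s) (emb \<psi>)"
  by (induction \<phi>s) auto

lemma SBTrust_thm_taut_imp:
  "SBTrust_thm a \<Longrightarrow> (\<And>f. teval f a \<Longrightarrow> teval f b) \<Longrightarrow> SBTrust_thm b"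
  by (rule SBTrust_thm.MP[of a]) (auto intro: SBTrust_thm.TAUT simp: tautology_def)

lemma SBTrust_thm_limp_iff_imps: "SBTrust_thm (limp as c) \<longleftrightarrow> SBTrust_thm (imps as c)"
  by (auto elim: SBTrust_thm_taut_imp simp: teval_imps teval_limp)

lemma derivable_taut_imp:
  "\<Phi> \<turnstile> a \<Longrightarrow> (\<And>f. teval f a \<Longrightarrow> teval f b) \<Longrightarrow> \<Phi> \<turnstile> b"
  by (rule MPd[of _ a], assumption, rule Thm, rule TAUT) (auto simp: tautology_def)

lemma derivable_taut_imp2:
  "\<Phi> \<turnstile> a \<Longrightarrow> \<Phi> \<turnstile> b \<Longrightarrow> (\<And>f. teval f a \<Longrightarrow> teval f b \<Longrightarrow> teval f c) \<Longrightarrow> \<Phi> \<turnstile> c"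
  by (rule MPd[of _ b], assumption, rule MPd[of _ a], assumption, rule Thm, rule TAUT)
    (auto simp: tautology_def)

lemma derivable_imps: "\<Phi> \<turnstile> imps as a \<Longrightarrow> set as \<subseteq> \<Phi> \<Longrightarrow> \<Phi> \<turnstile> a"
  by (induction as) (auto intro: MPd[OF Assm])

lemma derivable_iff_imps: "\<Phi> \<turnstile> a \<longleftrightarrow> (\<exists>as. set as \<subseteq> \<Phi> \<and> SBTrust_thm (imps as a))"
proof
  show "\<Phi> \<turnstile> a \<Longrightarrow> \<exists>as. set as \<subseteq> \<Phi> \<and> SBTrust_thm (imps as a)"
  proof (induction rule: derivable.induct)
    case (Assm a \<Phi>)
    have "SBTrust_thm (imps [a] a)" by (rule TAUT) (simp add: tautology_def)
    with Assm show ?case by (intro exI[of _ "[a]"]) simp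
  next
    case (Thm a \<Phi>)
    then show ?case by (intro exI[of _ "[]"]) simp
  next
    case (MPd \<Phi> a b)
    then obtain as bs where "set as \<subseteq> \<Phi>" "SBTrust_thm (imps as a)"
      and "set bs \<subseteq> \<Phi>" "SBTrust_thm (imps bs (TImp a b))"
      by blast
    moreover have "SBTrust_thm (imps (as @ bs) b)"
      by (rule SBTrust_thm.MP[OF \<open>SBTrust_thm (imps bs (TImp a b))\<close>],
          rule SBTrust_thm_taut_imp[OF \<open>SBTrust_thm (imps as a)\<close>]) (auto simp: teval_imps)
    ultimately show ?case by (intro exI[of _ "as @ bs"]) auto
  qed
qed (auto intro: derivable_imps Thm)

lemma derivable_mono: "\<Phi> \<turnstile> a \<Longrightarrow> \<Phi> \<subseteq> \<Psi> \<Longrightarrow> \<Psi> \<turnstile> a"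
proof (induction rule: derivable.induct)
  case (MPd \<Phi> a b)
  then show ?case by (blast intro: derivable.MPd)
qed (auto intro: Assm Thm)

lemma derivable_Un_imps:
  assumes "A \<union> B \<turnstile> a"
  obtains bs where "set bs \<subseteq> B" "A \<turnstile> imps bs a"
proof -
  obtain cs where cs: "set cs \<subseteq> A \<union> B" "SBTrust_thm (imps cs a)"
    using assms derivable_iff_imps by blast
  let ?bs = "filter (\<lambda>c. c \<notin> A) cs"
  have "SBTrust_thm (imps (filter (\<lambda>c. c \<in> A) cs) (imps ?bs a))"
    using cs(2) by (rule SBTrust_thm_taut_imp) (auto simp: teval_imps)
  then have "A \<turnstile> imps ?bs a"
    unfolding derivable_iff_imps by (intro exI[of _ "filter (\<lambda>c. c \<in> A) cs"]) auto
  moreover have "set ?bs \<subseteq> B" using cs(1) by auto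
  ultimately show thesis using that by blast
qed

lemma deduction_theorem:
  assumes "insert b \<Phi> \<turnstile> a"
  shows "\<Phi> \<turnstile> TImp b a"
proof -
  obtain bs where bs: "set bs \<subseteq> {b}" and "\<Phi> \<turnstile> imps bs a"
    using derivable_Un_imps[of \<Phi> "{b}" a] assms by auto
  from this(2) show ?thesis
    by (rule derivable_taut_imp) (use bs in \<open>auto simp: teval_imps\<close>)
qed

section \<open>Maximal consistent sets\<close>

definition mcs :: "tform set \<Rightarrow> bool" where
  "mcs \<Gamma> \<longleftrightarrow> \<not> \<Gamma> \<turnstile> TBot \<and> (\<forall>a. a \<in> \<Gamma> \<or> TNot a \<in> \<Gamma>)"

lemma lindenbaum:
  assumes "\<not> \<Phi> \<turnstile> a"
  obtains \<Gamma> where "mcs \<Gamma>" "\<Phi> \<subseteq> \<Gamma>" "a \<notin> \<Gamma>"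
proof -
  let ?A = "{\<Gamma>. \<Phi> \<subseteq> \<Gamma> \<and> \<not> \<Gamma> \<turnstile> a}"
  have "\<exists>M\<in>?A. \<forall>X\<in>?A. M \<subseteq> X \<longrightarrow> X = M"
  proof (rule subset_Zorn_nonempty)
    show "?A \<noteq> {}" using assms by blast
  next
    fix \<C> assume "\<C> \<noteq> {}" and chain: "subset.chain ?A \<C>"
    then have sub: "\<C> \<subseteq> ?A" unfolding subset.chain_def by blast
    have "\<not> \<Union>\<C> \<turnstile> a"
    proof
      assume "\<Union>\<C> \<turnstile> a"
      then obtain as where as: "set as \<subseteq> \<Union>\<C>" "SBTrust_thm (imps as a)"
        using derivable_iff_imps by blast
      then obtain X where "X \<in> \<C>" "set as \<subseteq> X"
        using finite_subset_Union_chain[OF _ _ \<open>\<C> \<noteq> {}\<close> chain] by blast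
      then have "X \<turnstile> a" using derivable_imps[OF Thm[OF as(2)]] by blast
      with \<open>X \<in> \<C>\<close> sub show False by blast
    qed
    then show "\<Union>\<C> \<in> ?A" using \<open>\<C> \<noteq> {}\<close> sub by blast
  qed
  then obtain M where M: "\<Phi> \<subseteq> M" "\<not> M \<turnstile> a"
    and maximal: "\<And>X. \<Phi> \<subseteq> X \<Longrightarrow> \<not> X \<turnstile> a \<Longrightarrow> M \<subseteq> X \<Longrightarrow> X = M"
    by auto
  have "b \<in> M \<or> TNot b \<in> M" for b
  proof (rule ccontr)
    assume "\<not> (b \<in> M \<or> TNot b \<in> M)"
    then have "insert b M \<turnstile> a" "insert (TNot b) M \<turnstile> a"
      using maximal[of "insert b M"] maximal[of "insert (TNot b) M"] M(1) by auto
    then have "M \<turnstile> TImp b a" "M \<turnstile> TImp (TNot b) a"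
      by (auto intro: deduction_theorem)
    then have "M \<turnstile> a" by (rule derivable_taut_imp2) auto
    with M(2) show False ..
  qed
  moreover have "\<not> M \<turnstile> TBot"
    using M(2) derivable_taut_imp[of M TBot a] by auto
  moreover have "a \<notin> M" using M(2) Assm[of a M] by blast
  ultimately show thesis using that M(1) unfolding mcs_def by blast
qed

lemma mcs_derivable:
  assumes "mcs \<Gamma>" "\<Gamma> \<turnstile> a"
  shows "a \<in> \<Gamma>"
proof (rule ccontr)
  assume "a \<notin> \<Gamma>"
  then have "\<Gamma> \<turnstile> TNot a" using assms(1) unfolding mcs_def by (auto intro: Assm)
  with assms(2) have "\<Gamma> \<turnstile> TBot" by (rule derivable_taut_imp2) simp
  with assms(1) show False unfolding mcs_def by blast
qed

lemma derivable_iff_in_all_mcs: "\<Phi> \<turnstile> a \<longleftrightarrow> (\<forall>\<Gamma>. mcs \<Gamma> \<longrightarrow> \<Phi> \<subseteq> \<Gamma> \<longrightarrow> a \<in> \<Gamma>)"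
proof
  show "\<Phi> \<turnstile> a \<Longrightarrow> \<forall>\<Gamma>. mcs \<Gamma> \<longrightarrow> \<Phi> \<subseteq> \<Gamma> \<longrightarrow> a \<in> \<Gamma>"
    using derivable_mono mcs_derivable by blast
  show "\<forall>\<Gamma>. mcs \<Gamma> \<longrightarrow> \<Phi> \<subseteq> \<Gamma> \<longrightarrow> a \<in> \<Gamma> \<Longrightarrow> \<Phi> \<turnstile> a"
    by (metis lindenbaum)
qed

lemma mcs_thm: "mcs \<Gamma> \<Longrightarrow> SBTrust_thm a \<Longrightarrow> a \<in> \<Gamma>"
  by (rule mcs_derivable[OF _ Thm])

lemma mcs_TBot: "mcs \<Gamma> \<Longrightarrow> TBot \<notin> \<Gamma>"
  unfolding mcs_def by (auto intro: Assm)

lemma mcs_taut_imp: "mcs \<Gamma> \<Longrightarrow> a \<in> \<Gamma> \<Longrightarrow> (\<And>f. teval f a \<Longrightarrow> teval f b) \<Longrightarrow> b \<in> \<Gamma>"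
  by (rule mcs_derivable, assumption, rule derivable_taut_imp[OF Assm])

lemma mcs_taut_imp2:
  "mcs \<Gamma> \<Longrightarrow> a \<in> \<Gamma> \<Longrightarrow> b \<in> \<Gamma> \<Longrightarrow> (\<And>f. teval f a \<Longrightarrow> teval f b \<Longrightarrow> teval f c) \<Longrightarrow> c \<in> \<Gamma>"
  by (rule mcs_derivable, assumption, rule derivable_taut_imp2[OF Assm Assm])

lemma mcs_TNot: "mcs \<Gamma> \<Longrightarrow> TNot a \<in> \<Gamma> \<longleftrightarrow> a \<notin> \<Gamma>"
  using mcs_taut_imp2[of \<Gamma> a "TNot a" TBot] mcs_TBot unfolding mcs_def by auto

lemma mcs_TAnd:
  assumes "mcs \<Gamma>"
  shows "TAnd a b \<in> \<Gamma> \<longleftrightarrow> a \<in> \<Gamma> \<and> b \<in> \<Gamma>"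
proof
  assume ab: "TAnd a b \<in> \<Gamma>"
  show "a \<in> \<Gamma> \<and> b \<in> \<Gamma>" by (intro conjI; rule mcs_taut_imp[OF assms ab]; simp)
next
  assume "a \<in> \<Gamma> \<and> b \<in> \<Gamma>"
  then show "TAnd a b \<in> \<Gamma>" by (elim conjE) (erule mcs_taut_imp2[OF assms], assumption, simp)
qed

lemma mcs_TOr:
  assumes "mcs \<Gamma>"
  shows "TOr a b \<in> \<Gamma> \<longleftrightarrow> a \<in> \<Gamma> \<or> b \<in> \<Gamma>"
proof
  assume ab: "TOr a b \<in> \<Gamma>"
  show "a \<in> \<Gamma> \<or> b \<in> \<Gamma>"
  proof (rule disjCI)
    assume "b \<notin> \<Gamma>"
    then have "TNot b \<in> \<Gamma>" using mcs_TNot[OF assms] by blast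
    then show "a \<in> \<Gamma>" by (rule mcs_taut_imp2[OF assms ab]) auto
  qed
next
  assume "a \<in> \<Gamma> \<or> b \<in> \<Gamma>"
  then show "TOr a b \<in> \<Gamma>" by (elim disjE) (erule mcs_taut_imp[OF assms], simp)+
qed

lemma mcs_TImp:
  assumes "mcs \<Gamma>"
  shows "TImp a b \<in> \<Gamma> \<longleftrightarrow> (a \<in> \<Gamma> \<longrightarrow> b \<in> \<Gamma>)"
proof (intro iffI impI)
  assume "TImp a b \<in> \<Gamma>" and "a \<in> \<Gamma>"
  then show "b \<in> \<Gamma>" by (rule mcs_taut_imp2[OF assms]) simp
next
  assume ab: "a \<in> \<Gamma> \<longrightarrow> b \<in> \<Gamma>"
  consider "b \<in> \<Gamma>" | "TNot a \<in> \<Gamma>" using ab mcs_TNot[OF assms] by blast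
  then show "TImp a b \<in> \<Gamma>" by cases (erule mcs_taut_imp[OF assms], simp)+
qed

lemma mcs_TIff:
  assumes "mcs \<Gamma>"
  shows "TIff a b \<in> \<Gamma> \<longleftrightarrow> (a \<in> \<Gamma> \<longleftrightarrow> b \<in> \<Gamma>)"
proof -
  have "TIff a b \<in> \<Gamma> \<longleftrightarrow> TAnd (TImp a b) (TImp b a) \<in> \<Gamma>"
    by (rule iffI; erule mcs_taut_imp[OF assms]; auto)
  then show ?thesis by (auto simp: mcs_TAnd[OF assms] mcs_TImp[OF assms])
qed

lemma mcs_thm_mp: "mcs \<Gamma> \<Longrightarrow> SBTrust_thm (TImp a b) \<Longrightarrow> a \<in> \<Gamma> \<Longrightarrow> b \<in> \<Gamma>"
  using mcs_TImp mcs_thm by blast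

section \<open>Conditionals and belief in maximal consistent sets\<close>

definition cond_lits :: "tform set \<Rightarrow> tform set" where
  "cond_lits \<Delta> = {TCond \<phi> \<psi> | \<phi> \<psi>. TCond \<phi> \<psi> \<in> \<Delta>} \<union> {TNot (TCond \<phi> \<psi>) | \<phi> \<psi>. TCond \<phi> \<psi> \<notin> \<Delta>}"

definition same_conds :: "tform set \<Rightarrow> tform set \<Rightarrow> bool" where
  "same_conds \<Delta> \<Delta>' \<longleftrightarrow> (\<forall>\<phi> \<psi>. TCond \<phi> \<psi> \<in> \<Delta> \<longleftrightarrow> TCond \<phi> \<psi> \<in> \<Delta>')"

definition normal :: "tform set \<Rightarrow> pform \<Rightarrow> bool" where
  "normal \<Delta> \<phi> \<longleftrightarrow> (\<forall>\<psi>. TCond \<phi> \<psi> \<in> \<Delta> \<longrightarrow> emb \<psi> \<in> \<Delta>)"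

lemma is_literal_cond_lits: "l \<in> cond_lits \<Delta> \<Longrightarrow> is_literal l"
  unfolding cond_lits_def is_literal_def by auto

lemma cond_lits_subset_iff: "mcs \<Delta>' \<Longrightarrow> cond_lits \<Delta> \<subseteq> \<Delta>' \<longleftrightarrow> same_conds \<Delta> \<Delta>'"
  unfolding cond_lits_def same_conds_def using mcs_TNot by blast

lemma derivable_cond_lits_iff:
  "cond_lits \<Delta> \<turnstile> a \<longleftrightarrow> (\<forall>\<Delta>'. mcs \<Delta>' \<longrightarrow> same_conds \<Delta> \<Delta>' \<longrightarrow> a \<in> \<Delta>')"
  by (simp add: derivable_iff_in_all_mcs cond_lits_subset_iff)

lemma mcs_S5F:
  assumes "mcs \<Delta>" "cond_lits \<Delta> \<turnstile> emb \<chi>"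
  shows "TCond (PNot \<chi>) PBot \<in> \<Delta>"
proof -
  obtain ls where ls: "set ls \<subseteq> cond_lits \<Delta>" "SBTrust_thm (imps ls (emb \<chi>))"
    using assms(2) derivable_iff_imps by blast
  then have "SBTrust_thm (limp ls (TCond (PNot \<chi>) PBot))"
    using is_literal_cond_lits by (intro S5F) (auto simp: SBTrust_thm_limp_iff_imps)
  then have "cond_lits \<Delta> \<turnstile> TCond (PNot \<chi>) PBot"
    using ls(1) by (intro derivable_imps[OF Thm]) (simp_all add: SBTrust_thm_limp_iff_imps)
  moreover have "cond_lits \<Delta> \<subseteq> \<Delta>"
    using assms(1) cond_lits_subset_iff same_conds_def by blast
  ultimately show ?thesis using assms(1) derivable_mono mcs_derivable by blast
qed

lemma mcs_RCK:
  assumes "mcs \<Delta>" "\<forall>\<phi>\<in>set \<phi>s. TCond \<psi> \<phi> \<in> \<Delta>" "SBTrust_thm (imps (map emb \<phi>s) (emb \<phi>'))"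
  shows "TCond \<psi> \<phi>' \<in> \<Delta>"
proof -
  have "SBTrust_thm (limp (map (TCond \<psi>) \<phi>s) (TCond \<psi> \<phi>'))"
    using assms(3) by (intro RCK) (simp add: SBTrust_thm_limp_iff_imps)
  then have "\<Delta> \<turnstile> TCond \<psi> \<phi>'"
    using assms(2) by (intro derivable_imps[OF Thm]) (auto simp: SBTrust_thm_limp_iff_imps)
  with assms(1) show ?thesis by (rule mcs_derivable)
qed

lemma mcs_LLplus:
  assumes "mcs \<Delta>" "cond_lits \<Delta> \<turnstile> emb (PIff \<phi> \<psi>)"
  shows "TCond \<phi> \<chi> \<in> \<Delta> \<longleftrightarrow> TCond \<psi> \<chi> \<in> \<Delta>"
proof -
  have "TCond (PNot (PIff \<phi> \<psi>)) PBot \<in> \<Delta>"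
    using assms by (rule mcs_S5F)
  then have "TIff (TCond \<phi> \<chi>) (TCond \<psi> \<chi>) \<in> \<Delta>"
    by (rule mcs_thm_mp[OF assms(1) LLplus])
  with assms(1) show ?thesis by (simp add: mcs_TIff)
qed

lemma mcs_TCond_of_cond_lits:
  assumes "mcs \<Delta>" "cond_lits \<Delta> \<turnstile> emb \<psi>"
  shows "TCond \<phi> \<psi> \<in> \<Delta>"
proof -
  have "TCond (PAnd \<phi> \<psi>) \<psi> \<in> \<Delta>"
  proof (rule mcs_RCK[OF assms(1), of "[PAnd \<phi> \<psi>]"])
    show "\<forall>\<chi>\<in>set [PAnd \<phi> \<psi>]. TCond (PAnd \<phi> \<psi>) \<chi> \<in> \<Delta>" using mcs_thm[OF assms(1) ID] by simp
    show "SBTrust_thm (imps (map emb [PAnd \<phi> \<psi>]) (emb \<psi>))" by (rule TAUT) (simp add: tautology_def)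
  qed
  moreover have "cond_lits \<Delta> \<turnstile> emb (PIff \<phi> (PAnd \<phi> \<psi>))"
    using assms(2) by (rule derivable_taut_imp) auto
  ultimately show ?thesis using mcs_LLplus[OF assms(1)] by blast
qed

lemma normal_witness:
  assumes "mcs \<Delta>" "TCond \<phi> \<psi> \<notin> \<Delta>"
  obtains \<Delta>' where "mcs \<Delta>'" "same_conds \<Delta> \<Delta>'" "normal \<Delta>' \<phi>" "emb \<psi> \<notin> \<Delta>'"
proof -
  let ?P = "{\<chi>. TCond \<phi> \<chi> \<in> \<Delta>}"
  have "\<not> cond_lits \<Delta> \<union> emb ` ?P \<turnstile> emb \<psi>"
  proof
    assume "cond_lits \<Delta> \<union> emb ` ?P \<turnstile> emb \<psi>"
    then obtain bs where "set bs \<subseteq> emb ` ?P" and bs: "cond_lits \<Delta> \<turnstile> imps bs (emb \<psi>)"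
      by (rule derivable_Un_imps)
    then obtain \<chi>s where \<chi>s: "set \<chi>s \<subseteq> ?P" and "bs = map emb \<chi>s"
      by (metis (no_types, lifting) image_iff lists_eq_set lists_image mem_Collect_eq)
    with bs have "cond_lits \<Delta> \<turnstile> emb (pimps \<chi>s \<psi>)" by (simp add: emb_pimps)
    with assms(1) have "TCond \<phi> (pimps \<chi>s \<psi>) \<in> \<Delta>" by (rule mcs_TCond_of_cond_lits)
    then have "TCond \<phi> \<psi> \<in> \<Delta>"
      using \<chi>s by (intro mcs_RCK[OF assms(1), of "\<chi>s @ [pimps \<chi>s \<psi>]"])
        (auto intro!: TAUT simp: tautology_def teval_imps emb_pimps)
    with assms(2) show False ..
  qed
  then obtain \<Delta>' where \<Delta>': "mcs \<Delta>'" "cond_lits \<Delta> \<union> emb ` ?P \<subseteq> \<Delta>'" "emb \<psi> \<notin> \<Delta>'"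
    by (rule lindenbaum)
  then have "same_conds \<Delta> \<Delta>'" using cond_lits_subset_iff by blast
  moreover have "normal \<Delta>' \<phi>"
    using \<Delta>'(2) \<open>same_conds \<Delta> \<Delta>'\<close> unfolding normal_def same_conds_def by blast
  ultimately show thesis using that \<Delta>' by blast
qed

lemma SBTrust_thm_imps_TB: "SBTrust_thm (imps as a) \<Longrightarrow> SBTrust_thm (imps (map TB as) (TB a))"
proof (induction as arbitrary: a)
  case Nil
  then show ?case by (simp add: NecB)
next
  case (Cons b as)
  have "SBTrust_thm (imps as (TImp b a))"
    using Cons.prems by (rule SBTrust_thm_taut_imp) (simp add: teval_imps)
  then have "SBTrust_thm (imps (map TB as) (TB (TImp b a)))" by (rule Cons.IH)
  moreover have "SBTrust_thm (TImp (imps (map TB as) (TB (TImp b a))) (imps (map TB (b # as)) (TB a)))"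
    using KB[of b a] by (rule SBTrust_thm_taut_imp) (auto simp: teval_imps)
  ultimately show ?case by (rule SBTrust_thm.MP)
qed

lemma mcs_TB_of_derivable:
  assumes "mcs \<Delta>" "{a. TB a \<in> \<Delta>} \<turnstile> b"
  shows "TB b \<in> \<Delta>"
proof -
  obtain as where "set as \<subseteq> {a. TB a \<in> \<Delta>}" "SBTrust_thm (imps as b)"
    using assms(2) derivable_iff_imps by blast
  then have "\<Delta> \<turnstile> TB b" by (intro derivable_imps[OF Thm[OF SBTrust_thm_imps_TB]]) auto
  with assms(1) show ?thesis by (rule mcs_derivable)
qed

lemma mcs_not_TB_TBot:
  assumes "mcs \<Delta>"
  shows "TB TBot \<notin> \<Delta>"
proof
  assume "TB TBot \<in> \<Delta>"
  then have "TNot (TB (TNot TBot)) \<in> \<Delta>" by (rule mcs_thm_mp[OF assms DB])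
  moreover have "TB (TNot TBot) \<in> \<Delta>"
    by (rule mcs_thm[OF assms NecB], rule TAUT) (simp add: tautology_def)
  ultimately show False using mcs_TNot[OF assms] by blast
qed

section \<open>The canonical model\<close>

type_synonym canon_world = "tform set \<times> pform option"

(* (Delta, None) is the plain copy of Delta, (Delta, Some chi) a candidate most normal
   chi-world. *)
definition canon_worlds :: "canon_world set" where
  "canon_worlds = {(\<Delta>, t). mcs \<Delta> \<and> pred_option (normal \<Delta>) t}"

definition canon_cell :: "tform set \<Rightarrow> canon_world set" where
  "canon_cell \<Delta> = {w \<in> canon_worlds. same_conds \<Delta> (fst w)}"

(* canon_pref v w reads "v is at least as normal as w". No world satisfying chi is at least
   as normal as a world tagged chi, while a world tagged chi is at least as normal as every
   untagged world satisfying chi. *)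
fun canon_pref :: "canon_world \<Rightarrow> canon_world \<Rightarrow> bool" where
  "canon_pref (\<Delta>, Some \<chi>) (\<Delta>', Some \<chi>') \<longleftrightarrow> emb \<chi>' \<notin> \<Delta> \<and> emb \<chi> \<in> \<Delta>'"
| "canon_pref (\<Delta>, None) (\<Delta>', Some \<chi>') \<longleftrightarrow> emb \<chi>' \<notin> \<Delta>"
| "canon_pref (\<Delta>, Some \<chi>) (\<Delta>', None) \<longleftrightarrow> emb \<chi> \<in> \<Delta>'"
| "canon_pref (\<Delta>, None) (\<Delta>', None) \<longleftrightarrow> False"

definition canon_model :: "canon_world trust_model" where
  "canon_model =
    \<lparr>St = canon_worlds,
     Cells = canon_cell ` Collect mcs,
     Pref = (\<lambda>C v w. v \<in> C \<and> w \<in> C \<and> canon_pref v w),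
     Rel = (\<lambda>v w. v \<in> canon_worlds \<and> w \<in> canon_worlds \<and> {a. TB a \<in> fst v} \<subseteq> fst w),
     Val = (\<lambda>p. {w \<in> canon_worlds. TVar p \<in> fst w})\<rparr>"

abbreviation canon_most :: "tform set \<Rightarrow> pform \<Rightarrow> canon_world set" where
  "canon_most \<Delta> \<phi> \<equiv> most canon_model (canon_cell \<Delta>) (ext canon_model (canon_cell \<Delta>) \<phi>)"

lemma canon_model_simps [simp]:
  "St canon_model = canon_worlds"
  "Cells canon_model = canon_cell ` Collect mcs"
  "Pref canon_model C v w \<longleftrightarrow> v \<in> C \<and> w \<in> C \<and> canon_pref v w"
  "Rel canon_model v w \<longleftrightarrow> v \<in> canon_worlds \<and> w \<in> canon_worlds \<and> {a. TB a \<in> fst v} \<subseteq> fst w"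
  "Val canon_model p = {w \<in> canon_worlds. TVar p \<in> fst w}"
  by (simp_all add: canon_model_def)

lemma mem_canon_worlds [simp]: "(\<Delta>, t) \<in> canon_worlds \<longleftrightarrow> mcs \<Delta> \<and> pred_option (normal \<Delta>) t"
  by (simp add: canon_worlds_def)

lemma mcs_fst_canon_world: "w \<in> canon_worlds \<Longrightarrow> mcs (fst w)"
  by (cases w) simp

lemma mcs_normal_emb: "mcs \<Delta> \<Longrightarrow> normal \<Delta> \<phi> \<Longrightarrow> emb \<phi> \<in> \<Delta>"
  unfolding normal_def using mcs_thm ID by blast

lemma psat_canon_model: "w \<in> canon_worlds \<Longrightarrow> psat canon_model w \<phi> \<longleftrightarrow> emb \<phi> \<in> fst w"
  by (induction \<phi>) (simp_all add: mcs_fst_canon_world mcs_TBot mcs_TNot mcs_TAnd mcs_TOr mcs_TImp mcs_TIff)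

lemma canon_cell_eq: "w \<in> canon_cell \<Delta> \<Longrightarrow> canon_cell \<Delta> = canon_cell (fst w)"
  unfolding canon_cell_def same_conds_def by auto

lemma in_canon_cell: "w \<in> canon_worlds \<Longrightarrow> w \<in> canon_cell (fst w)"
  unfolding canon_cell_def same_conds_def by auto

lemma ext_canon_cell: "ext canon_model (canon_cell \<Delta>) \<phi> = {w \<in> canon_cell \<Delta>. emb \<phi> \<in> fst w}"
  unfolding ext_def canon_cell_def using psat_canon_model by auto

lemma canon_cell_TCond_PBot:
  assumes "w \<in> canon_cell \<Delta>" "emb \<phi> \<in> fst w"
  shows "TCond \<phi> PBot \<notin> \<Delta>"
proof
  assume "TCond \<phi> PBot \<in> \<Delta>"
  then have "TCond \<phi> PBot \<in> fst w" using assms(1) unfolding canon_cell_def same_conds_def by blast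
  moreover have "mcs (fst w)" using assms(1) mcs_fst_canon_world unfolding canon_cell_def by blast
  ultimately have "TNot (emb \<phi>) \<in> fst w" using mcs_thm_mp ST by blast
  with assms(2) \<open>mcs (fst w)\<close> show False by (simp add: mcs_TNot)
qed

lemma tagged_witness:
  assumes "mcs \<Delta>" "TCond \<phi> \<psi> \<notin> \<Delta>"
  obtains \<Delta>' where "(\<Delta>', Some \<phi>) \<in> canon_most \<Delta> \<phi>" "emb \<psi> \<notin> \<Delta>'"
proof -
  obtain \<Delta>' where \<Delta>': "mcs \<Delta>'" "same_conds \<Delta> \<Delta>'" "normal \<Delta>' \<phi>" "emb \<psi> \<notin> \<Delta>'"
    using assms by (rule normal_witness)
  then have "(\<Delta>', Some \<phi>) \<in> ext canon_model (canon_cell \<Delta>) \<phi>"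
    unfolding ext_canon_cell by (simp add: canon_cell_def mcs_normal_emb)
  then have "(\<Delta>', Some \<phi>) \<in> canon_most \<Delta> \<phi>"
    unfolding most_def ext_canon_cell by (auto elim: canon_pref.elims)
  then show thesis using \<Delta>'(4) by (rule that)
qed

lemma canon_mostD:
  assumes "w \<in> canon_most \<Delta> \<phi>"
  shows "w \<in> canon_cell \<Delta>" "emb \<phi> \<in> fst w"
    and "\<And>v. v \<in> canon_cell \<Delta> \<Longrightarrow> emb \<phi> \<in> fst v \<Longrightarrow> canon_pref v w \<Longrightarrow> canon_pref w v"
  using assms unfolding most_def ext_canon_cell by auto

lemma canon_most_tagged:
  assumes "mcs \<Delta>" "w \<in> canon_most \<Delta> \<phi>"
  obtains \<Delta>w \<chi> where "w = (\<Delta>w, Some \<chi>)"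
proof (cases w)
  case (Pair \<Delta>w t)
  show thesis
  proof (cases t)
    case None
    have "TCond \<phi> PBot \<notin> \<Delta>" using canon_cell_TCond_PBot canon_mostD(1,2)[OF assms(2)] by blast
    then obtain \<Delta>' where "(\<Delta>', Some \<phi>) \<in> canon_most \<Delta> \<phi>"
      using tagged_witness[OF assms(1)] by blast
    then have "(\<Delta>', Some \<phi>) \<in> canon_cell \<Delta>" "emb \<phi> \<in> \<Delta>'" by (auto dest: canon_mostD)
    moreover have "canon_pref (\<Delta>', Some \<phi>) w" "\<not> canon_pref w (\<Delta>', Some \<phi>)"
      using canon_mostD(2)[OF assms(2)] Pair None by auto
    ultimately show thesis using canon_mostD(3)[OF assms(2), of "(\<Delta>', Some \<phi>)"] by simp
  next
    case (Some \<chi>)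
    show thesis by (rule that) (simp add: Pair Some)
  qed
qed

lemma canon_most_tag_cond_lits:
  assumes "(\<Delta>w, Some \<chi>) \<in> canon_most \<Delta> \<phi>"
  shows "cond_lits \<Delta> \<turnstile> emb (PImp \<phi> \<chi>)"
  unfolding derivable_cond_lits_iff
proof (intro allI impI)
  fix \<Delta>' assume "mcs \<Delta>'" "same_conds \<Delta> \<Delta>'"
  show "emb (PImp \<phi> \<chi>) \<in> \<Delta>'"
  proof (rule ccontr)
    assume "emb (PImp \<phi> \<chi>) \<notin> \<Delta>'"
    then have "emb \<phi> \<in> \<Delta>'" "emb \<chi> \<notin> \<Delta>'" using \<open>mcs \<Delta>'\<close> by (simp_all add: mcs_TImp)
    moreover have "(\<Delta>', None) \<in> canon_cell \<Delta>"
      using \<open>mcs \<Delta>'\<close> \<open>same_conds \<Delta> \<Delta>'\<close> by (simp add: canon_cell_def)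
    ultimately show False using canon_mostD(3)[OF assms, of "(\<Delta>', None)"] by simp
  qed
qed

lemma canon_most_TCond:
  assumes "mcs \<Delta>" "w \<in> canon_most \<Delta> \<phi>" "TCond \<phi> \<psi> \<in> \<Delta>"
  shows "emb \<psi> \<in> fst w"
proof -
  obtain \<Delta>w \<chi> where w: "w = (\<Delta>w, Some \<chi>)" using assms(1,2) by (rule canon_most_tagged)
  have "cond_lits \<Delta> \<turnstile> emb (PIff \<phi> (PAnd \<chi> \<phi>))"
    using canon_most_tag_cond_lits[OF assms(2)[unfolded w]] by (rule derivable_taut_imp) auto
  then have "TCond (PAnd \<chi> \<phi>) \<psi> \<in> \<Delta>" using mcs_LLplus[OF assms(1)] assms(3) by blast
  then have "TCond \<chi> (PImp \<phi> \<psi>) \<in> \<Delta>" by (rule mcs_thm_mp[OF assms(1) SH])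
  moreover have "w \<in> canon_cell \<Delta>" "emb \<phi> \<in> \<Delta>w" using canon_mostD(1,2)[OF assms(2)] w by auto
  ultimately have "TCond \<chi> (PImp \<phi> \<psi>) \<in> \<Delta>w" "mcs \<Delta>w" "normal \<Delta>w \<chi>"
    using w unfolding canon_cell_def same_conds_def by auto
  then have "emb (PImp \<phi> \<psi>) \<in> \<Delta>w" unfolding normal_def by blast
  with \<open>mcs \<Delta>w\<close> \<open>emb \<phi> \<in> \<Delta>w\<close> w show ?thesis by (simp add: mcs_TImp)
qed

lemma canon_TCond_iff:
  assumes "mcs \<Delta>"
  shows "canon_most \<Delta> \<phi> \<subseteq> ext canon_model (canon_cell \<Delta>) \<psi> \<longleftrightarrow> TCond \<phi> \<psi> \<in> \<Delta>"
proof
  assume sub: "canon_most \<Delta> \<phi> \<subseteq> ext canon_model (canon_cell \<Delta>) \<psi>"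
  show "TCond \<phi> \<psi> \<in> \<Delta>"
  proof (rule ccontr)
    assume "TCond \<phi> \<psi> \<notin> \<Delta>"
    with assms obtain \<Delta>' where "(\<Delta>', Some \<phi>) \<in> canon_most \<Delta> \<phi>" "emb \<psi> \<notin> \<Delta>'"
      by (rule tagged_witness)
    with sub show False unfolding ext_canon_cell by auto
  qed
next
  assume "TCond \<phi> \<psi> \<in> \<Delta>"
  show "canon_most \<Delta> \<phi> \<subseteq> ext canon_model (canon_cell \<Delta>) \<psi>"
  proof
    fix w assume w: "w \<in> canon_most \<Delta> \<phi>"
    with assms \<open>TCond \<phi> \<psi> \<in> \<Delta>\<close> have "emb \<psi> \<in> fst w" by (intro canon_most_TCond)
    with canon_mostD(1)[OF w] show "w \<in> ext canon_model (canon_cell \<Delta>) \<psi>"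
      by (simp add: ext_canon_cell)
  qed
qed

lemma canon_cell_iff:
  assumes "w \<in> canon_worlds" "C \<in> Cells canon_model"
  shows "w \<in> C \<longleftrightarrow> C = canon_cell (fst w)"
proof -
  obtain \<Delta> where "C = canon_cell \<Delta>" using assms(2) by auto
  then show ?thesis using canon_cell_eq[of w \<Delta>] in_canon_cell[OF assms(1)] by auto
qed

lemma canon_truth: "w \<in> canon_worlds \<Longrightarrow> tsat canon_model w a \<longleftrightarrow> a \<in> fst w"
proof (induction a arbitrary: w)
  case (TCond \<phi> \<psi>)
  have "mcs (fst w)" using TCond by (rule mcs_fst_canon_world)
  have "tsat canon_model w (TCond \<phi> \<psi>) \<longleftrightarrow>
      canon_most (fst w) \<phi> \<subseteq> ext canon_model (canon_cell (fst w)) \<psi>"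
  proof
    assume "tsat canon_model w (TCond \<phi> \<psi>)"
    then show "canon_most (fst w) \<phi> \<subseteq> ext canon_model (canon_cell (fst w)) \<psi>"
      using \<open>mcs (fst w)\<close> in_canon_cell[OF TCond] by simp
  next
    assume "canon_most (fst w) \<phi> \<subseteq> ext canon_model (canon_cell (fst w)) \<psi>"
    then show "tsat canon_model w (TCond \<phi> \<psi>)"
      using canon_cell_iff[OF TCond] by (simp only: tsat.simps) blast
  qed
  with \<open>mcs (fst w)\<close> show ?case by (simp add: canon_TCond_iff)
next
  case (TB a)
  have "mcs (fst w)" using TB.prems by (rule mcs_fst_canon_world)
  have "tsat canon_model w (TB a) \<longleftrightarrow> (\<forall>\<Gamma>. mcs \<Gamma> \<longrightarrow> {b. TB b \<in> fst w} \<subseteq> \<Gamma> \<longrightarrow> a \<in> \<Gamma>)"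
  proof
    assume boxed: "tsat canon_model w (TB a)"
    show "\<forall>\<Gamma>. mcs \<Gamma> \<longrightarrow> {b. TB b \<in> fst w} \<subseteq> \<Gamma> \<longrightarrow> a \<in> \<Gamma>"
    proof (intro allI impI)
      fix \<Gamma> assume "mcs \<Gamma>" "{b. TB b \<in> fst w} \<subseteq> \<Gamma>"
      then have "(\<Gamma>, None) \<in> canon_worlds" "Rel canon_model w (\<Gamma>, None)"
        using TB.prems by simp_all
      then show "a \<in> \<Gamma>" using boxed TB.IH[of "(\<Gamma>, None)"] by simp
    qed
  next
    assume all: "\<forall>\<Gamma>. mcs \<Gamma> \<longrightarrow> {b. TB b \<in> fst w} \<subseteq> \<Gamma> \<longrightarrow> a \<in> \<Gamma>"
    show "tsat canon_model w (TB a)"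
    proof (simp only: tsat.simps, intro allI impI)
      fix v assume "Rel canon_model w v"
      then have "v \<in> canon_worlds" "{b. TB b \<in> fst w} \<subseteq> fst v" by simp_all
      then show "tsat canon_model v a" using all TB.IH mcs_fst_canon_world by blast
    qed
  qed
  also have "\<dots> \<longleftrightarrow> {b. TB b \<in> fst w} \<turnstile> a" by (simp add: derivable_iff_in_all_mcs)
  also have "\<dots> \<longleftrightarrow> TB a \<in> fst w"
    using mcs_TB_of_derivable[OF \<open>mcs (fst w)\<close>] Assm[of a "{b. TB b \<in> fst w}"] by auto
  finally show ?case .
next
  case (TAnd a b)
  then show ?case by (simp add: mcs_fst_canon_world mcs_TAnd)
next
  case (TOr a b)
  then show ?case by (simp add: mcs_fst_canon_world mcs_TOr)
next
  case (TImp a b)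
  then show ?case by (simp add: mcs_fst_canon_world mcs_TImp)
next
  case (TIff a b)
  then show ?case by (simp add: mcs_fst_canon_world mcs_TIff)
next
  case (TNot a)
  then show ?case by (simp add: mcs_fst_canon_world mcs_TNot)
qed (simp_all add: mcs_fst_canon_world mcs_TBot)

lemma canon_Rel_serial:
  assumes "w \<in> canon_worlds"
  shows "\<exists>v. Rel canon_model w v"
proof -
  have "mcs (fst w)" using assms by (rule mcs_fst_canon_world)
  then have "\<not> {b. TB b \<in> fst w} \<turnstile> TBot" using mcs_TB_of_derivable mcs_not_TB_TBot by blast
  then obtain \<Gamma> where "mcs \<Gamma>" "{b. TB b \<in> fst w} \<subseteq> \<Gamma>" by (rule lindenbaum)
  with assms show ?thesis by (intro exI[of _ "(\<Gamma>, None)"]) simp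
qed

lemma canon_Rel_trans:
  assumes "Rel canon_model u v" "Rel canon_model v w"
  shows "Rel canon_model u w"
proof -
  have "mcs (fst u)" using assms(1) mcs_fst_canon_world by simp
  have "b \<in> fst w" if "TB b \<in> fst u" for b
  proof -
    have "TB (TB b) \<in> fst u" using mcs_thm_mp[OF \<open>mcs (fst u)\<close> FourB that] .
    then show ?thesis using assms by auto
  qed
  with assms show ?thesis by auto
qed

lemma is_partition_canon_cells: "is_partition canon_worlds (canon_cell ` Collect mcs)"
  unfolding is_partition_def
proof (intro conjI)
  show "\<Union> (canon_cell ` Collect mcs) = canon_worlds"
  proof
    show "\<Union> (canon_cell ` Collect mcs) \<subseteq> canon_worlds" by (auto simp: canon_cell_def)
    show "canon_worlds \<subseteq> \<Union> (canon_cell ` Collect mcs)"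
      using in_canon_cell mcs_fst_canon_world by blast
  qed
  show "{} \<notin> canon_cell ` Collect mcs"
  proof
    assume "{} \<in> canon_cell ` Collect mcs"
    then obtain \<Delta> where "mcs \<Delta>" "canon_cell \<Delta> = {}" by auto
    moreover from this(1) have "(\<Delta>, None) \<in> canon_cell \<Delta>"
      by (simp add: canon_cell_def same_conds_def)
    ultimately show False by blast
  qed
  show "\<forall>C\<in>canon_cell ` Collect mcs. \<forall>D\<in>canon_cell ` Collect mcs. C \<noteq> D \<longrightarrow> C \<inter> D = {}"
    using canon_cell_eq by blast
qed

lemma trust_model_canon_model: "trust_model canon_model"
  unfolding trust_model_def
proof (intro conjI)
  show "\<forall>C\<in>Cells canon_model. \<forall>\<phi>. ext canon_model C \<phi> \<noteq> {} \<longrightarrow>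
      most canon_model C (ext canon_model C \<phi>) \<noteq> {}"
  proof (intro ballI allI impI)
    fix C \<phi> assume "C \<in> Cells canon_model" "ext canon_model C \<phi> \<noteq> {}"
    then obtain \<Delta> w where "mcs \<Delta>" "C = canon_cell \<Delta>" "w \<in> ext canon_model C \<phi>" by auto
    moreover from this have "w \<in> canon_cell \<Delta>" "emb \<phi> \<in> fst w" by (simp_all add: ext_canon_cell)
    moreover from this have "TCond \<phi> PBot \<notin> \<Delta>" by (intro canon_cell_TCond_PBot)
    ultimately obtain \<Delta>' where "(\<Delta>', Some \<phi>) \<in> most canon_model C (ext canon_model C \<phi>)"
      using tagged_witness by metis
    then show "most canon_model C (ext canon_model C \<phi>) \<noteq> {}" by blast
  qed
  show "\<forall>s\<in>St canon_model. \<exists>t. Rel canon_model s t" using canon_Rel_serial by simp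
  show "\<forall>s t u. Rel canon_model s t \<longrightarrow> Rel canon_model t u \<longrightarrow> Rel canon_model s u"
    using canon_Rel_trans by blast
  show "is_partition (St canon_model) (Cells canon_model)" using is_partition_canon_cells by simp
qed auto

section \<open>Renaming the states of a Trust model\<close>

definition map_trust_model :: "('a \<Rightarrow> 'b) \<Rightarrow> 'a trust_model \<Rightarrow> 'b trust_model" where
  "map_trust_model f M =
    \<lparr>St = f ` St M,
     Cells = image f ` Cells M,
     Pref = (\<lambda>C x y. \<exists>a b. x = f a \<and> y = f b \<and> Pref M (f -` C) a b),
     Rel = (\<lambda>x y. \<exists>a b. x = f a \<and> y = f b \<and> Rel M a b),
     Val = (\<lambda>p. f ` Val M p)\<rparr>"

context
  fixes f :: "'a \<Rightarrow> 'b" and M :: "'a trust_model"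
  assumes inj: "inj f"
begin

lemma map_trust_model_simps [simp]:
  "St (map_trust_model f M) = f ` St M"
  "Cells (map_trust_model f M) = image f ` Cells M"
  "Pref (map_trust_model f M) (f ` C) (f a) (f b) \<longleftrightarrow> Pref M C a b"
  "Rel (map_trust_model f M) (f a) y \<longleftrightarrow> (\<exists>b. y = f b \<and> Rel M a b)"
  "Val (map_trust_model f M) p = f ` Val M p"
  by (auto simp: map_trust_model_def inj_vimage_image_eq[OF inj] inj_eq[OF inj])

lemma psat_map_trust_model: "psat (map_trust_model f M) (f s) \<phi> \<longleftrightarrow> psat M s \<phi>"
  by (induction \<phi>) (simp_all add: inj_image_mem_iff[OF inj])

lemma ext_map_trust_model: "ext (map_trust_model f M) (f ` C) \<phi> = f ` ext M C \<phi>"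
  unfolding ext_def using psat_map_trust_model by auto

lemma most_map_trust_model: "most (map_trust_model f M) (f ` C) (f ` X) = f ` most M C X"
  unfolding most_def by (auto simp: inj_image_mem_iff[OF inj])

lemma tsat_map_trust_model: "tsat (map_trust_model f M) (f s) a \<longleftrightarrow> tsat M s a"
  by (induction a arbitrary: s)
    (auto simp: inj_image_mem_iff[OF inj] inj_image_subset_iff[OF inj]
      ext_map_trust_model most_map_trust_model)

lemma trust_model_map_trust_model:
  assumes "trust_model M"
  shows "trust_model (map_trust_model f M)"
  unfolding trust_model_def
proof (intro conjI)
  have M: "trust_model M" by (fact assms)
  have P: "is_partition (St M) (Cells M)" using M unfolding trust_model_def by blast
  show "is_partition (St (map_trust_model f M)) (Cells (map_trust_model f M))"
    unfolding is_partition_def map_trust_model_simps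
  proof (intro conjI ballI impI)
    show "\<Union> (image f ` Cells M) = f ` St M" using P by (simp add: is_partition_def flip: image_Union)
    show "{} \<notin> image f ` Cells M" using P by (auto simp: is_partition_def)
  next
    fix C' D' assume "C' \<in> image f ` Cells M" "D' \<in> image f ` Cells M" "C' \<noteq> D'"
    then obtain C D where "C \<in> Cells M" "D \<in> Cells M" "C' = f ` C" "D' = f ` D" "C \<noteq> D" by blast
    with P show "C' \<inter> D' = {}" by (simp add: is_partition_def flip: image_Int[OF inj])
  qed
  show "\<forall>C\<in>Cells (map_trust_model f M). \<forall>s t. Pref (map_trust_model f M) C s t \<longrightarrow> s \<in> C \<and> t \<in> C"
    using M unfolding trust_model_def map_trust_model_def
    by (auto simp: inj_vimage_image_eq[OF inj])
  show "\<forall>C\<in>Cells (map_trust_model f M). \<forall>\<phi>. ext (map_trust_model f M) C \<phi> \<noteq> {} \<longrightarrow>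
      most (map_trust_model f M) C (ext (map_trust_model f M) C \<phi>) \<noteq> {}"
    using M unfolding trust_model_def by (auto simp: ext_map_trust_model most_map_trust_model)
  show "\<forall>s t. Rel (map_trust_model f M) s t \<longrightarrow>
      s \<in> St (map_trust_model f M) \<and> t \<in> St (map_trust_model f M)"
    using M unfolding trust_model_def map_trust_model_def by auto
  show "\<forall>s\<in>St (map_trust_model f M). \<exists>t. Rel (map_trust_model f M) s t"
    using M unfolding trust_model_def map_trust_model_def by fastforce
  show "\<forall>s t u. Rel (map_trust_model f M) s t \<longrightarrow> Rel (map_trust_model f M) t u \<longrightarrow>
      Rel (map_trust_model f M) s u"
    using M unfolding trust_model_def map_trust_model_def by (auto simp: inj_eq[OF inj])
  show "\<forall>p. Val (map_trust_model f M) p \<subseteq> St (map_trust_model f M)"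
    using M unfolding trust_model_def by (simp add: image_mono)
qed

end

lemma entails_on_transfer:
  fixes f :: "'a \<Rightarrow> 'b" and M :: "'a trust_model"
  assumes "entails_on TYPE('b) \<Phi> a" "inj f" "trust_model M" "s \<in> St M" "\<forall>b\<in>\<Phi>. tsat M s b"
  shows "tsat M s a"
proof -
  have "\<forall>s'\<in>St (map_trust_model f M). (\<forall>b\<in>\<Phi>. tsat (map_trust_model f M) s' b) \<longrightarrow>
      tsat (map_trust_model f M) s' a"
    using assms(1) trust_model_map_trust_model[OF assms(2,3)] unfolding entails_on_def by blast
  then have "tsat (map_trust_model f M) (f s) a"
    using assms(4,5) by (simp add: assms(2) tsat_map_trust_model)
  then show ?thesis by (simp add: assms(2) tsat_map_trust_model)
qed

definition tag_formula :: "pform option \<Rightarrow> tform" where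
  "tag_formula = case_option TBot (\<lambda>\<phi>. TCond \<phi> \<phi>)"

definition encode_world :: "canon_world \<Rightarrow> tform set set" where
  "encode_world w = {insert (tag_formula (snd w)) (TB ` fst w)}"

lemma inj_encode_world: "inj encode_world"
proof (rule injI)
  fix v w assume "encode_world v = encode_world w"
  then have eq: "insert (tag_formula (snd v)) (TB ` fst v) = insert (tag_formula (snd w)) (TB ` fst w)"
    by (simp add: encode_world_def)
  have untagged: "tag_formula t \<notin> range TB" for t by (cases t) (auto simp: tag_formula_def)
  have split: "insert (tag_formula t) (TB ` A) \<inter> range TB = TB ` A"
    "insert (tag_formula t) (TB ` A) - range TB = {tag_formula t}" for t A
    using untagged[of t] by auto
  have "TB ` fst v = TB ` fst w" by (metis eq split(1))
  then have "fst v = fst w" by (simp add: inj_image_eq_iff inj_def)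
  moreover have "tag_formula (snd v) = tag_formula (snd w)" by (metis eq split(2) singleton_inject)
  then have "snd v = snd w" by (simp add: tag_formula_def split: option.splits)
  ultimately show "v = w" by (simp add: prod_eq_iff)
qed

theorem theorem5:
  fixes \<Phi> :: "tform set" and \<alpha> :: tform
  assumes "\<Phi> \<Turnstile> \<alpha>"
  shows "\<Phi> \<turnstile> \<alpha>"
proof (rule ccontr)
  assume "\<not> \<Phi> \<turnstile> \<alpha>"
  then obtain \<Gamma> where \<Gamma>: "mcs \<Gamma>" "\<Phi> \<subseteq> \<Gamma>" "\<alpha> \<notin> \<Gamma>" by (rule lindenbaum)
  then have w: "(\<Gamma>, None) \<in> canon_worlds" by simp
  have "\<forall>b\<in>\<Phi>. tsat canon_model (\<Gamma>, None) b" using canon_truth[OF w] \<Gamma>(2) by auto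
  with assms w have "tsat canon_model (\<Gamma>, None) \<alpha>"
    unfolding entails_def
    by (intro entails_on_transfer[OF _ inj_encode_world trust_model_canon_model]) simp_all
  with \<Gamma>(3) canon_truth[OF w] show False by simp
qed

end
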